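(* Let $C\subseteq\{-1,1\}^n$ be a binary code (in $\pm1$ form), transmitted over a memoryless output-symmetric channel written multiplicatively as $\mathbf{y}=\mathbf{x}\mathbf{z}$, where $\mathbf{x}\in C$ is the transmitted codeword and the noise $\mathbf{z}$ has a distribution independent of $\mathbf{x}$. Consider a faulty iterative message-passing decoder with messages in $\{-Q,\dots,Q\}$ ($Q>0$ an integer) operating as follows: the initial messages are $\mu_{i,j}^{(0)}=\nu_{i,j}^{(0)}=\mu_i^{(0)}$, the channel message of variable node $i$, which has a symmetric distribution; at each iteration $t\ge0$ the ideal next messages are $\nu_{i,j}^{(t+1)}=F_{i,j}(\boldsymbol{\mu}^{(t)},\mu_i^{(0)})$, where $\boldsymbol{\mu}^{(t)}$ is the vector of all variable-to-check messages; and the actual (faulty) messages $\mu_{i,j}^{(t+1)}$ are obtained from $\nu_{i,j}^{(t+1)}$ through a deviation channel with conditional distribution $\phi_{\mu_{i,j}^{(t+1)}\mid\nu_{i,j}^{(t+1)},\mathbf{y}}$. Assume that, conditionally on $\mathbf{y}$, the messages on distinct edges and the channel messages are mutually independent. If the message-update functions $F_{i,j}$ are symmetric with respect to $C$ and the deviations are weakly symmetric, then for every iteration $t\ge0$ and every edge $(i,j)$ the message error probability $\Pr(x_i\mu_{i,j}^{(t)}<0)+\tfrac12\Pr(\mu_{i,j}^{(t)}=0)$ is the same for every transmitted codeword $\mathbf{x}\in C$.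
   Context: $\phi$ denotes a probability (mass/density) function. For $\mathbf{x}\in C$ and a message vector $\boldsymbol{\mu}$ indexed by edges $(k,j)$, $\mathbf{x}\boldsymbol{\mu}$ denotes the vector with entries $x_k\mu_{k,j}$. A message-update function $F_{i,j}$ is symmetric with respect to $C$ if $F_{i,j}(\boldsymbol{\mu},\nu_i^{(0)})=x_iF_{i,j}(\mathbf{x}\boldsymbol{\mu},x_i\nu_i^{(0)})$ for every $\boldsymbol{\mu}$, every $\nu_i^{(0)}$ and every $\mathbf{x}\in C$. A message $\mu$ associated with variable node $i$ has a symmetric distribution if $\phi_{\mu\mid\mathbf{y}}(m\mid\mathbf{x}\mathbf{z})=\phi_{\mu\mid\mathbf{y}}(x_im\mid\mathbf{z})$ for all $m$, $\mathbf{z}$ and $\mathbf{x}\in C$. The deviation model is weakly symmetric if $\phi_{\mu_{i,j}^{(t)}\mid\nu_{i,j}^{(t)},\mathbf{y}}(\mu\mid\nu,\mathbf{x}\mathbf{z})=\phi_{\mu_{i,j}^{(t)}\mid\nu_{i,j}^{(t)},\mathbf{y}}(x_i\mu\mid x_i\nu,\mathbf{z})$ for all $\mu,\nu,\mathbf{z}$, all $\mathbf{x}\in C$, all $t$ and all edges $(i,j)$. *)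

theory Defs
  imports "HOL-Probability.Probability"
begin

text \<open>Variable nodes have type 'v, check nodes type 'c; an edge is a pair (i,j).
  A message vector is a function on edges (set to 0 off the edge set E).
  All distributions below are conditional on the channel output y.\<close>

definition cw_mult :: "('v \<Rightarrow> int) \<Rightarrow> ('v \<Rightarrow> real) \<Rightarrow> ('v \<Rightarrow> real)" where
  "cw_mult x z = (\<lambda>k. of_int (x k) * z k)"

definition msg_mult :: "('v \<Rightarrow> int) \<Rightarrow> ('v \<times> 'c \<Rightarrow> int) \<Rightarrow> ('v \<times> 'c \<Rightarrow> int)" where
  "msg_mult x \<mu> = (\<lambda>(k, j). x k * \<mu> (k, j))"

definition chan_law :: "('v \<Rightarrow> ('v \<Rightarrow> real) \<Rightarrow> int pmf) \<Rightarrow> ('v \<Rightarrow> real) \<Rightarrow> ('v \<Rightarrow> int) pmf" where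
  "chan_law phi0 y = Pi_pmf UNIV 0 (\<lambda>i. phi0 i y)"

text \<open>Joint conditional law (given y) of (channel messages, variable-to-check messages mu^(t)).  For t+1: nu_(i,j)^(t+1) = F (i,j) mu^(t) mu_i^(0), then
  mu_(i,j)^(t+1) is drawn from the deviation channel D (t+1) (i,j) nu y; messages on distinct
  edges and the channel messages are (conditionally on y) mutually independent.\<close>
fun dec_state ::
  "('v \<times> 'c) set \<Rightarrow> ('v \<Rightarrow> ('v \<Rightarrow> real) \<Rightarrow> int pmf)
   \<Rightarrow> ('v \<times> 'c \<Rightarrow> ('v \<times> 'c \<Rightarrow> int) \<Rightarrow> int \<Rightarrow> int)
   \<Rightarrow> (nat \<Rightarrow> 'v \<times> 'c \<Rightarrow> int \<Rightarrow> ('v \<Rightarrow> real) \<Rightarrow> int pmf)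
   \<Rightarrow> nat \<Rightarrow> ('v \<Rightarrow> real) \<Rightarrow> (('v \<Rightarrow> int) \<times> ('v \<times> 'c \<Rightarrow> int)) pmf" where
  "dec_state E phi0 F D 0 y =
     map_pmf (\<lambda>c. (c, (\<lambda>e. if e \<in> E then c (fst e) else 0))) (chan_law phi0 y)"
| "dec_state E phi0 F D (Suc t) y =
     pair_pmf (chan_law phi0 y)
       (Pi_pmf E 0 (\<lambda>e. bind_pmf (dec_state E phi0 F D t y)
                          (\<lambda>(c, m). D (Suc t) e (F e m (c (fst e))) y)))"

definition msg_law where
  "msg_law E phi0 F D t e y = map_pmf (\<lambda>(c, m). m e) (dec_state E phi0 F D t y)"

definition msg_error_prob where
  "msg_error_prob N E phi0 F D t e x =
     (\<integral>z. measure_pmf.prob (msg_law E phi0 F D t e (cw_mult x z)) {m. x (fst e) * m < 0}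
          + 1/2 * measure_pmf.prob (msg_law E phi0 F D t e (cw_mult x z)) {0} \<partial>N)"

end

theory Submission
  imports Defs
begin

text \<open>Flipping the signs of the transmitted codeword x turns the channel output y = x z into z,
  and, by the symmetry of the channel messages, of the update rules and of the deviations, it
  flips the sign of every message on an edge at variable node i by x i. By induction on the
  iteration the whole decoder state for output x z is therefore the image under this sign flip
  of the decoder state for output z. Hence x i \<mu> has, for every noise realisation z, the law
  of the message obtained when the all-ones word is sent, and the error probability does not
  depend on x.\<close>

lemma Pi_pmf_map_dependent:
  assumes "finite A"
  shows "Pi_pmf A d' (\<lambda>a. map_pmf (f a) (g a)) =
         map_pmf (\<lambda>h a. if a \<in> A then f a (h a) else d') (Pi_pmf A d g)"
proof -
  have "Pi_pmf A d' (\<lambda>a. map_pmf (f a) (g a)) =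
          Pi_pmf A d' (\<lambda>a. g a \<bind> (\<lambda>v. return_pmf (f a v)))"
    by (simp add: map_pmf_def)
  also have "\<dots> = Pi_pmf A d g \<bind> (\<lambda>h. return_pmf (\<lambda>a. if a \<in> A then f a (h a) else d'))"
    by (subst Pi_pmf_bind[where d' = d]) (auto simp: assms)
  finally show ?thesis
    by (simp add: map_pmf_def)
qed

lemma sign_mult_cancel: "s \<in> {-1, 1::int} \<Longrightarrow> s * (s * m) = m"
  by auto

lemma pmf_eq_map_sign_flip:
  assumes s: "s \<in> {-1, 1::int}" and pmf_eq: "\<And>m. pmf p m = pmf q (s * m)"
  shows "p = map_pmf ((*) s) q"
proof (rule pmf_eqI)
  fix m
  have "inj ((*) s)"
    using s by (auto intro: injI)
  then have "pmf (map_pmf ((*) s) q) (s * (s * m)) = pmf q (s * m)"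
    by (rule pmf_map_inj')
  then show "pmf p m = pmf (map_pmf ((*) s) q) m"
    using pmf_eq sign_mult_cancel[OF s] by simp
qed

lemma chan_law_cw_mult:
  fixes x :: "'v::finite \<Rightarrow> int"
  assumes x: "\<And>k. x k \<in> {-1, 1}"
    and chan_sym: "\<And>i m. pmf (phi0 i (cw_mult x z)) m = pmf (phi0 i z) (x i * m)"
  shows "chan_law phi0 (cw_mult x z) = map_pmf (\<lambda>c k. x k * c k) (chan_law phi0 z)"
proof -
  have "chan_law phi0 (cw_mult x z) = Pi_pmf UNIV 0 (\<lambda>i. map_pmf ((*) (x i)) (phi0 i z))"
    unfolding chan_law_def by (intro Pi_pmf_cong refl pmf_eq_map_sign_flip x chan_sym)
  then show ?thesis
    unfolding chan_law_def by (simp add: Pi_pmf_map_dependent[where d = 0])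
qed

lemma set_chan_law_bounded:
  assumes chan_range: "\<And>i. set_pmf (phi0 i y) \<subseteq> {-Q..Q}"
    and c: "c \<in> set_pmf (chan_law phi0 (y :: 'v::finite \<Rightarrow> real))"
  shows "\<bar>c k\<bar> \<le> Q"
proof -
  have "c \<in> PiE_dflt UNIV 0 (set_pmf \<circ> (\<lambda>i. phi0 i y))"
    using c set_Pi_pmf_subset'[of "UNIV :: 'v set" 0 "\<lambda>i. phi0 i y"]
    unfolding chan_law_def by auto
  then have "c k \<in> set_pmf (phi0 k y)"
    by (auto simp: PiE_dflt_def)
  then show ?thesis
    using chan_range[of k] by (auto simp: subset_iff)
qed

text \<open>The symmetry of the update rules is only assumed for admissible message vectors
  (bounded by Q and zero off the edge set), so every reachable state must be admissible.\<close>

lemma set_dec_state_bounded: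
  fixes E :: "('v::finite \<times> 'c::finite) set"
  assumes chan_range: "\<And>i y. set_pmf (phi0 i y) \<subseteq> {-Q..Q}"
    and D_range: "\<And>t e \<nu> y. set_pmf (D t e \<nu> y) \<subseteq> {-Q..Q}"
    and cm: "(c, m) \<in> set_pmf (dec_state E phi0 F D t y)"
  shows "(\<forall>k. \<bar>c k\<bar> \<le> Q) \<and> (\<forall>e'. e' \<notin> E \<longrightarrow> m e' = 0) \<and> (\<forall>e'\<in>E. \<bar>m e'\<bar> \<le> Q)"
proof (cases t)
  case 0
  then show ?thesis
    using cm set_chan_law_bounded[OF chan_range] by auto
next
  case (Suc t')
  let ?next = "\<lambda>e. dec_state E phi0 F D t' y \<bind> (\<lambda>(c, m). D t e (F e m (c (fst e))) y)"
  have c: "c \<in> set_pmf (chan_law phi0 y)" and m: "m \<in> set_pmf (Pi_pmf E 0 ?next)"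
    using cm Suc by auto
  have "m \<in> PiE_dflt E 0 (set_pmf \<circ> ?next)"
    using set_Pi_pmf_subset'[OF finite, of E 0 ?next] m by auto
  then have "(\<forall>e'. e' \<notin> E \<longrightarrow> m e' = 0) \<and> (\<forall>e'\<in>E. \<bar>m e'\<bar> \<le> Q)"
    using D_range by (fastforce simp: PiE_dflt_def)
  then show ?thesis
    using set_chan_law_bounded[OF chan_range c] by auto
qed

lemma next_msg_cw_mult:
  fixes E :: "('v::finite \<times> 'c::finite) set" and x :: "'v \<Rightarrow> int"
  assumes x: "\<And>k. x k \<in> {-1, 1}"
    and chan_range: "\<And>i y. set_pmf (phi0 i y) \<subseteq> {-Q..Q}"
    and F_sym: "\<And>i j \<mu> c. \<lbrakk>(i, j) \<in> E; \<forall>e'. e' \<notin> E \<longrightarrow> \<mu> e' = 0;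
           \<forall>e'\<in>E. \<bar>\<mu> e'\<bar> \<le> Q; \<bar>c\<bar> \<le> Q\<rbrakk>
           \<Longrightarrow> F (i, j) \<mu> c = x i * F (i, j) (msg_mult x \<mu>) (x i * c)"
    and D_range: "\<And>t e \<nu> y. set_pmf (D t e \<nu> y) \<subseteq> {-Q..Q}"
    and D_weak_sym: "\<And>i j \<mu> \<nu>. (i, j) \<in> E \<Longrightarrow>
           pmf (D s (i, j) \<nu> (cw_mult x z)) \<mu> = pmf (D s (i, j) (x i * \<nu>) z) (x i * \<mu>)"
    and state_flip: "dec_state E phi0 F D t (cw_mult x z) =
           map_pmf (\<lambda>(c, m). (\<lambda>k. x k * c k, msg_mult x m)) (dec_state E phi0 F D t z)"
    and "e \<in> E"
  shows "dec_state E phi0 F D t (cw_mult x z) \<bind>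
           (\<lambda>(c, m). D s e (F e m (c (fst e))) (cw_mult x z))
       = map_pmf ((*) (x (fst e)))
           (dec_state E phi0 F D t z \<bind> (\<lambda>(c, m). D s e (F e m (c (fst e))) z))"
proof -
  obtain i j where e: "e = (i, j)" "(i, j) \<in> E"
    using \<open>e \<in> E\<close> by (cases e) auto
  let ?S = "dec_state E phi0 F D t z"
  have "dec_state E phi0 F D t (cw_mult x z) \<bind>
          (\<lambda>(c, m). D s e (F e m (c (fst e))) (cw_mult x z))
      = ?S \<bind> (\<lambda>(c, m). D s e (F e (msg_mult x m) (x i * c i)) (cw_mult x z))"
    unfolding state_flip map_pmf_def bind_assoc_pmf bind_return_pmf
    by (simp add: e split_beta')
  also have "\<dots> = ?S \<bind> (\<lambda>(c, m). map_pmf ((*) (x i)) (D s e (F e m (c i)) z))"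
  proof (intro bind_pmf_cong refl, clarify)
    fix c m
    assume "(c, m) \<in> set_pmf ?S"
    note bounded = set_dec_state_bounded[OF chan_range D_range this]
    have "F e m (c i) = x i * F e (msg_mult x m) (x i * c i)"
      unfolding e(1) by (rule F_sym) (use e bounded in auto)
    then show "D s e (F e (msg_mult x m) (x i * c i)) (cw_mult x z) =
               map_pmf ((*) (x i)) (D s e (F e m (c i)) z)"
      using pmf_eq_map_sign_flip[OF x D_weak_sym[OF e(2)]]
      by (simp add: e(1))
  qed
  also have "\<dots> = map_pmf ((*) (x (fst e))) (?S \<bind> (\<lambda>(c, m). D s e (F e m (c (fst e))) z))"
    by (simp add: map_bind_pmf e split_beta')
  finally show ?thesis .
qed

lemma dec_state_cw_mult:
  fixes E :: "('v::finite \<times> 'c::finite) set" and x :: "'v \<Rightarrow> int"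
  assumes x: "\<And>k. x k \<in> {-1, 1}"
    and chan_range: "\<And>i y. set_pmf (phi0 i y) \<subseteq> {-Q..Q}"
    and chan_sym: "\<And>i m. pmf (phi0 i (cw_mult x z)) m = pmf (phi0 i z) (x i * m)"
    and F_sym: "\<And>i j \<mu> c. \<lbrakk>(i, j) \<in> E; \<forall>e'. e' \<notin> E \<longrightarrow> \<mu> e' = 0;
           \<forall>e'\<in>E. \<bar>\<mu> e'\<bar> \<le> Q; \<bar>c\<bar> \<le> Q\<rbrakk>
           \<Longrightarrow> F (i, j) \<mu> c = x i * F (i, j) (msg_mult x \<mu>) (x i * c)"
    and D_range: "\<And>t e \<nu> y. set_pmf (D t e \<nu> y) \<subseteq> {-Q..Q}"
    and D_weak_sym: "\<And>t i j \<mu> \<nu>. (i, j) \<in> E \<Longrightarrow>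
           pmf (D t (i, j) \<nu> (cw_mult x z)) \<mu> = pmf (D t (i, j) (x i * \<nu>) z) (x i * \<mu>)"
  shows "dec_state E phi0 F D t (cw_mult x z) =
         map_pmf (\<lambda>(c, m). (\<lambda>k. x k * c k, msg_mult x m)) (dec_state E phi0 F D t z)"
proof (induction t)
  case 0
  show ?case
    by (simp add: chan_law_cw_mult[OF x chan_sym] map_pmf_comp msg_mult_def case_prod_beta)
       (intro map_pmf_cong refl, auto)
next
  case (Suc t)
  let ?next = "\<lambda>y e. dec_state E phi0 F D t y \<bind> (\<lambda>(c, m). D (Suc t) e (F e m (c (fst e))) y)"
  let ?flip_chan = "\<lambda>c k. x k * c k"
  let ?flip_msg = "\<lambda>m e. if e \<in> E then x (fst e) * m e else 0"
  have "dec_state E phi0 F D (Suc t) (cw_mult x z) =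
        pair_pmf (map_pmf ?flip_chan (chan_law phi0 z))
          (Pi_pmf E 0 (\<lambda>e. map_pmf ((*) (x (fst e))) (?next z e)))"
    unfolding dec_state.simps chan_law_cw_mult[OF x chan_sym]
    by (intro arg_cong[where f = "pair_pmf _"] Pi_pmf_cong refl
        next_msg_cw_mult[OF x chan_range F_sym D_range D_weak_sym Suc.IH])
  also have "\<dots> = map_pmf (map_prod ?flip_chan ?flip_msg) (dec_state E phi0 F D (Suc t) z)"
    unfolding dec_state.simps Pi_pmf_map_dependent[OF finite, where d = 0]
    by (simp only: map_pair[symmetric] map_prod_def)
  also have "\<dots> = map_pmf (\<lambda>(c, m). (?flip_chan c, msg_mult x m)) (dec_state E phi0 F D (Suc t) z)"
  proof (intro map_pmf_cong refl, clarify)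
    fix c m
    assume "(c, m) \<in> set_pmf (dec_state E phi0 F D (Suc t) z)"
    from set_dec_state_bounded[OF chan_range D_range this]
    have "\<forall>e. e \<notin> E \<longrightarrow> m e = 0" by blast
    then show "map_prod ?flip_chan ?flip_msg (c, m) = (?flip_chan c, msg_mult x m)"
      by (auto simp: msg_mult_def fun_eq_iff)
  qed
  finally show ?case .
qed

lemma msg_law_cw_mult:
  fixes E :: "('v::finite \<times> 'c::finite) set" and x :: "'v \<Rightarrow> int"
  assumes "dec_state E phi0 F D t (cw_mult x z) =
           map_pmf (\<lambda>(c, m). (\<lambda>k. x k * c k, msg_mult x m)) (dec_state E phi0 F D t z)"
  shows "msg_law E phi0 F D t e (cw_mult x z) = map_pmf ((*) (x (fst e))) (msg_law E phi0 F D t e z)"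
  unfolding msg_law_def assms by (simp add: map_pmf_comp case_prod_beta msg_mult_def)

lemma msg_error_prob_eq_all_ones:
  fixes E :: "('v::finite \<times> 'c::finite) set" and x :: "'v \<Rightarrow> int"
  assumes x: "\<And>k. x k \<in> {-1, 1}"
    and chan_range: "\<And>i y. set_pmf (phi0 i y) \<subseteq> {-Q..Q}"
    and chan_sym: "\<And>i m z. pmf (phi0 i (cw_mult x z)) m = pmf (phi0 i z) (x i * m)"
    and F_sym: "\<And>i j \<mu> c. \<lbrakk>(i, j) \<in> E; \<forall>e'. e' \<notin> E \<longrightarrow> \<mu> e' = 0;
           \<forall>e'\<in>E. \<bar>\<mu> e'\<bar> \<le> Q; \<bar>c\<bar> \<le> Q\<rbrakk>
           \<Longrightarrow> F (i, j) \<mu> c = x i * F (i, j) (msg_mult x \<mu>) (x i * c)"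
    and D_range: "\<And>t e \<nu> y. set_pmf (D t e \<nu> y) \<subseteq> {-Q..Q}"
    and D_weak_sym: "\<And>t i j \<mu> \<nu> z. (i, j) \<in> E \<Longrightarrow>
           pmf (D t (i, j) \<nu> (cw_mult x z)) \<mu> = pmf (D t (i, j) (x i * \<nu>) z) (x i * \<mu>)"
  shows "msg_error_prob N E phi0 F D t e x = msg_error_prob N E phi0 F D t e (\<lambda>_. 1)"
  unfolding msg_error_prob_def
proof (intro Bochner_Integration.integral_cong refl)
  fix z
  let ?P = "measure_pmf.prob (msg_law E phi0 F D t e z)"
  have law: "msg_law E phi0 F D t e (cw_mult x z) = map_pmf ((*) (x (fst e))) (msg_law E phi0 F D t e z)"
    by (rule msg_law_cw_mult, rule dec_state_cw_mult[where Q = Q])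
       (fact x chan_range chan_sym F_sym D_range D_weak_sym)+
  have "x (fst e) * (x (fst e) * m) < 0 \<longleftrightarrow> m < 0" for m
    by (simp only: sign_mult_cancel[OF x])
  moreover have "x (fst e) * m = 0 \<longleftrightarrow> m = 0" for m
    using x[of "fst e"] by auto
  ultimately have "measure_pmf.prob (msg_law E phi0 F D t e (cw_mult x z)) {m. x (fst e) * m < 0}
        = ?P {m. m < 0}"
    and "measure_pmf.prob (msg_law E phi0 F D t e (cw_mult x z)) {0} = ?P {0}"
    unfolding law measure_map_pmf by (simp_all add: vimage_def)
  moreover have "cw_mult (\<lambda>_. 1) z = z"
    by (simp add: cw_mult_def)
  ultimately show "measure_pmf.prob (msg_law E phi0 F D t e (cw_mult x z)) {m. x (fst e) * m < 0}
        + 1 / 2 * measure_pmf.prob (msg_law E phi0 F D t e (cw_mult x z)) {0}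
      = measure_pmf.prob (msg_law E phi0 F D t e (cw_mult (\<lambda>_. 1) z)) {m. 1 * m < 0}
        + 1 / 2 * measure_pmf.prob (msg_law E phi0 F D t e (cw_mult (\<lambda>_. 1) z)) {0}"
    by simp
qed

theorem lemma2:
  fixes C :: "('v::finite \<Rightarrow> int) set"
    and N :: "('v \<Rightarrow> real) measure"
    and E :: "('v \<times> 'c::finite) set"
    and Q :: int
    and phi0 :: "'v \<Rightarrow> ('v \<Rightarrow> real) \<Rightarrow> int pmf"
    and F :: "'v \<times> 'c \<Rightarrow> ('v \<times> 'c \<Rightarrow> int) \<Rightarrow> int \<Rightarrow> int"
    and D :: "nat \<Rightarrow> 'v \<times> 'c \<Rightarrow> int \<Rightarrow> ('v \<Rightarrow> real) \<Rightarrow> int pmf"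
  assumes code: "\<And>x k. x \<in> C \<Longrightarrow> x k \<in> {-1, 1}"
    and Qpos: "Q > 0"
    and noise: "prob_space N"
    and memoryless: "prob_space.indep_vars N (\<lambda>_. borel) (\<lambda>k z. z k) UNIV"
    and chan_range: "\<And>i y. set_pmf (phi0 i y) \<subseteq> {-Q..Q}"
    and chan_sym: "\<And>i m z x. x \<in> C \<Longrightarrow>
           pmf (phi0 i (cw_mult x z)) m = pmf (phi0 i z) (x i * m)"
    and F_range: "\<And>e \<mu> c. \<lbrakk>\<forall>e'. e' \<notin> E \<longrightarrow> \<mu> e' = 0; \<forall>e'\<in>E. \<bar>\<mu> e'\<bar> \<le> Q; \<bar>c\<bar> \<le> Q\<rbrakk>
           \<Longrightarrow> \<bar>F e \<mu> c\<bar> \<le> Q"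
    and F_sym: "\<And>i j \<mu> c x. \<lbrakk>(i, j) \<in> E; x \<in> C; \<forall>e'. e' \<notin> E \<longrightarrow> \<mu> e' = 0;
           \<forall>e'\<in>E. \<bar>\<mu> e'\<bar> \<le> Q; \<bar>c\<bar> \<le> Q\<rbrakk>
           \<Longrightarrow> F (i, j) \<mu> c = x i * F (i, j) (msg_mult x \<mu>) (x i * c)"
    and D_range: "\<And>t e \<nu> y. set_pmf (D t e \<nu> y) \<subseteq> {-Q..Q}"
    and D_weak_sym: "\<And>t i j \<mu> \<nu> z x. \<lbrakk>(i, j) \<in> E; x \<in> C\<rbrakk> \<Longrightarrow>
           pmf (D t (i, j) \<nu> (cw_mult x z)) \<mu> = pmf (D t (i, j) (x i * \<nu>) z) (x i * \<mu>)"
    and edge: "e \<in> E"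
    and cw: "x \<in> C" "x' \<in> C"
  shows "msg_error_prob N E phi0 F D t e x = msg_error_prob N E phi0 F D t e x'"
proof -
  have "msg_error_prob N E phi0 F D t e y = msg_error_prob N E phi0 F D t e (\<lambda>_. 1)"
    if "y \<in> C" for y
    by (rule msg_error_prob_eq_all_ones[where Q = Q])
       (use that code chan_range chan_sym F_sym D_range D_weak_sym in auto)
  from this[OF cw(1)] this[OF cw(2)] show ?thesis
    by simp
qed

end
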